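(* Assume $p=m$, $D=0$, and $\mathrm{rank}\begin{bmatrix} I-A & B\\ C & 0\end{bmatrix}=n+m$. Let $(X,U)$ be a minimizer of Problem 3. Then the equation $\begin{bmatrix} K & H \\ G & F \end{bmatrix}\begin{bmatrix} X \\ Z \end{bmatrix} = \begin{bmatrix} U \\ V \end{bmatrix}$ has a unique solution $(K,H,G,F)$. Suppose moreover that (i) $\det(I-(A+BK))\neq 0$ and (ii) $\det(I-F)\neq 0$. Then $C(I-(A+BK))^{-1}B$ is invertible and, with $$M=\big(C(I-(A+BK))^{-1}B\big)^{-1},\qquad L=-G(I-(A+BK))^{-1}BM,$$ for every initial state $x_0\in\mathbb{R}^n$ and every constant reference value $r_+\in\mathbb{R}^m$, the closed-loop system $\psi_r(t+1)=\mathcal{A}_{cl}\psi_r(t)+\mathcal{M}_r r_+$, $y(t)=\mathcal{C}\psi_r(t)$ has a unique steady state $\psi_\infty=(x_\infty,z_\infty)$ (i.e. a unique solution of $\psi_\infty=\mathcal{A}_{cl}\psi_\infty+\mathcal{M}_r r_+$), and it satisfies $y_\infty=Cx_\infty=r_+$ and $z_\infty=0$.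
   Context: Plant: $x(t+1)=Ax(t)+Bu(t)$, $x(0)=x_0$, $y(t)=Cx(t)$, with $x\in\mathbb{R}^n$, $u,y\in\mathbb{R}^m$, $(A,B)$ reachable, horizon $N\ge 2$. $P\in\mathbb{R}^{N\times N}$ is the nilpotent shift matrix $P=\begin{bmatrix}0 & 0\\ I_{N-1} & 0\end{bmatrix}$; $\otimes$ is the Kronecker product; $\mathrm{e}_1\in\mathbb{R}^N$; $\|W\|_1=\sum_{i,j}|w_{ij}|$. Problem 3 (minimum attention control): minimize $\|U(P\otimes I_n)-U\|_1$ over $X\in\mathbb{R}^{n\times nN}$, $U\in\mathbb{R}^{m\times nN}$ subject to $AX+BU=X(P\otimes I_n)$ and $X(\mathrm{e}_1\otimes I_n)=I_n$. $Z=\begin{bmatrix}0_{n(N-1)\times n} & I_{n(N-1)}\end{bmatrix}$, $V=Z(P\otimes I_n)$. Tracking compensator: $z_r(t+1)=Fz_r(t)+Gx(t)+Lr(t)$, $u(t)=Hz_r(t)+Kx(t)+Mr(t)$, $z_r(0)=0$. Closed-loop augmented system with $\psi_r=(x,z_r)$: $\mathcal{A}_{cl}=\begin{bmatrix}A+BK & BH\\ G & F\end{bmatrix}$, $\mathcal{M}_r=\begin{bmatrix}BM\\ L\end{bmatrix}$, $\mathcal{C}=[C~~0]$. *)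

theory Defs
  imports "Jordan_Normal_Form.Matrix" "Jordan_Normal_Form.DL_Rank" "Jordan_Normal_Form.Determinant"
begin

definition shift_mat :: "nat \<Rightarrow> real mat" where
  "shift_mat N = mat N N (\<lambda>(i,j). if i = Suc j then 1 else 0)"

definition kron :: "real mat \<Rightarrow> real mat \<Rightarrow> real mat" where
  "kron P Q = mat (dim_row P * dim_row Q) (dim_col P * dim_col Q)
     (\<lambda>(i,j). P $$ (i div dim_row Q, j div dim_col Q) * Q $$ (i mod dim_row Q, j mod dim_col Q))"

definition e1_mat :: "nat \<Rightarrow> real mat" where
  "e1_mat N = mat N 1 (\<lambda>(i,j). if i = 0 then 1 else 0)"

definition norm1 :: "real mat \<Rightarrow> real" where
  "norm1 W = (\<Sum>i<dim_row W. \<Sum>j<dim_col W. \<bar>W $$ (i,j)\<bar>)"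

text \<open>Inverse of a square matrix (meaningful when it is invertible).\<close>
definition minv :: "real mat \<Rightarrow> real mat" where
  "minv Q = (THE R. R \<in> carrier_mat (dim_row Q) (dim_row Q) \<and>
                    Q * R = 1\<^sub>m (dim_row Q) \<and> R * Q = 1\<^sub>m (dim_row Q))"

text \<open>Reachability of (A,B): rank [B, AB, ..., A^(n-1) B] = n.\<close>
definition reach_mat :: "real mat \<Rightarrow> real mat \<Rightarrow> real mat" where
  "reach_mat A B = mat (dim_row A) (dim_row A * dim_col B)
     (\<lambda>(i,j). ((A ^\<^sub>m (j div dim_col B)) * B) $$ (i, j mod dim_col B))"

definition reachable :: "real mat \<Rightarrow> real mat \<Rightarrow> bool" where
  "reachable A B = (vec_space.rank (dim_row A) (reach_mat A B) = dim_row A)"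

definition feasible3 :: "real mat \<Rightarrow> real mat \<Rightarrow> nat \<Rightarrow> nat \<Rightarrow> nat \<Rightarrow> real mat \<Rightarrow> real mat \<Rightarrow> bool" where
  "feasible3 A B n m N X U \<longleftrightarrow>
     X \<in> carrier_mat n (n*N) \<and> U \<in> carrier_mat m (n*N) \<and>
     A * X + B * U = X * kron (shift_mat N) (1\<^sub>m n) \<and>
     X * kron (e1_mat N) (1\<^sub>m n) = 1\<^sub>m n"

definition cost3 :: "nat \<Rightarrow> nat \<Rightarrow> real mat \<Rightarrow> real" where
  "cost3 n N U = norm1 (U * kron (shift_mat N) (1\<^sub>m n) - U)"

definition minimizer3 :: "real mat \<Rightarrow> real mat \<Rightarrow> nat \<Rightarrow> nat \<Rightarrow> nat \<Rightarrow> real mat \<Rightarrow> real mat \<Rightarrow> bool" where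
  "minimizer3 A B n m N X U \<longleftrightarrow> feasible3 A B n m N X U \<and>
     (\<forall>X' U'. feasible3 A B n m N X' U' \<longrightarrow> cost3 n N U \<le> cost3 n N U')"

definition Zmat :: "nat \<Rightarrow> nat \<Rightarrow> real mat" where
  "Zmat n N = mat (n*(N-1)) (n*N) (\<lambda>(i,j). if j = i + n then 1 else 0)"

end

theory Submission
  imports Defs
begin

text \<open>
  For a feasible (X, U) the constraint X (e_1 \<otimes> I) = I makes the first n columns of X the identity,
  so T = [X; Z] is block unit upper triangular, hence invertible, and the gain equation
  [K H; G F] T = [U; V] has the unique solution [U; V] T^-1. Together with the dynamics constraint
  A X + B U = X (P \<otimes> I) it says A_cl T = T (P \<otimes> I): the closed loop is similar to the nilpotent
  shift, so it has no nonzero fixed vector and the steady-state equation has at most one solution.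
  Right multiplication by [I 0; -K I] and a Schur complement give
  det [I-A B; C 0] = det (I-(A+BK)) * det (-C (I-(A+BK))^-1 B), so the rank condition makes the DC gain
  invertible. The steady state is x = (I-(A+BK))^-1 B M r, z = 0, and C x = r since M inverts the DC gain.
\<close>

section \<open>Block matrices\<close>

lemma split_block_four_block_mat:
  assumes "A \<in> carrier_mat r1 c1" "B \<in> carrier_mat r1 c2" "C \<in> carrier_mat r2 c1" "D \<in> carrier_mat r2 c2"
  shows "split_block (four_block_mat A B C D) r1 c1 = (A, B, C, D)"
  unfolding split_block_def Let_def using assms by (simp add: mat_eq_iff)

lemma four_block_mat_inject:
  assumes "A \<in> carrier_mat r1 c1" "B \<in> carrier_mat r1 c2" "C \<in> carrier_mat r2 c1" "D \<in> carrier_mat r2 c2"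
    and "A' \<in> carrier_mat r1 c1" "B' \<in> carrier_mat r1 c2" "C' \<in> carrier_mat r2 c1" "D' \<in> carrier_mat r2 c2"
  shows "four_block_mat A B C D = four_block_mat A' B' C' D' \<longleftrightarrow> A = A' \<and> B = B' \<and> C = C' \<and> D = D'"
  by (metis split_block_four_block_mat[OF assms(1-4)] split_block_four_block_mat[OF assms(5-8)] prod.inject)

lemma append_rows_inject:
  assumes "A \<in> carrier_mat r1 c" "B \<in> carrier_mat r2 c" "A' \<in> carrier_mat r1 c" "B' \<in> carrier_mat r2 c"
  shows "A @\<^sub>r B = A' @\<^sub>r B' \<longleftrightarrow> A = A' \<and> B = B'"
  using four_block_mat_inject[of A r1 c "0\<^sub>m r1 0" 0 B r2 "0\<^sub>m r2 0" A' "0\<^sub>m r1 0" B' "0\<^sub>m r2 0"] assms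
  by (simp add: append_rows_def)

lemma append_rows_mult_right:
  assumes A: "A \<in> carrier_mat r1 c" and B: "B \<in> carrier_mat r2 c" and S: "S \<in> carrier_mat c d"
  shows "(A @\<^sub>r B) * S = (A * S) @\<^sub>r (B * S)"
proof (rule eq_matI)
  fix i j assume "i < dim_row ((A * S) @\<^sub>r (B * S))" "j < dim_col ((A * S) @\<^sub>r (B * S))"
  then show "((A @\<^sub>r B) * S) $$ (i, j) = ((A * S) @\<^sub>r (B * S)) $$ (i, j)"
    using A B S by (cases "i < r1") (auto simp: append_rows_def scalar_prod_def intro!: sum.cong)
qed (use A B S in \<open>auto simp: append_rows_def\<close>)

lemma four_block_mat_mult_append_rows:
  assumes K: "K \<in> carrier_mat r1 c1" and H: "H \<in> carrier_mat r1 c2"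
    and G: "G \<in> carrier_mat r2 c1" and F: "F \<in> carrier_mat r2 c2"
    and X: "X \<in> carrier_mat c1 d" and Z: "Z \<in> carrier_mat c2 d"
  shows "four_block_mat K H G F * (X @\<^sub>r Z) = (K * X + H * Z) @\<^sub>r (G * X + F * Z)"
  unfolding append_rows_def
  using assms by (subst mult_four_block_mat[OF K H G F X _ Z]) (auto intro!: cong_four_block_mat simp: mat_eq_iff)

lemma four_block_unit_upper_inverse:
  fixes R :: "'a :: ring_1 mat"
  assumes R: "R \<in> carrier_mat a b"
  shows "four_block_mat (1\<^sub>m a) R (0\<^sub>m b a) (1\<^sub>m b) * four_block_mat (1\<^sub>m a) (- R) (0\<^sub>m b a) (1\<^sub>m b)
    = 1\<^sub>m (a + b)"
proof -
  have "- R \<in> carrier_mat a b" using R by simp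
  with R show ?thesis
    by (simp add: mult_four_block_mat[OF one_carrier_mat R zero_carrier_mat one_carrier_mat one_carrier_mat]
        four_block_one_mat[symmetric] del: four_block_one_mat)
      (intro cong_four_block_mat; simp add: mat_eq_iff)
qed

lemma ex1_four_block_mult_eq:
  fixes T :: "'a :: semiring_1 mat"
  assumes T: "T \<in> carrier_mat (c1 + c2) (c1 + c2)" and Ti: "Ti \<in> carrier_mat (c1 + c2) (c1 + c2)"
    and TiT: "Ti * T = 1\<^sub>m (c1 + c2)" and TTi: "T * Ti = 1\<^sub>m (c1 + c2)"
    and Y: "Y \<in> carrier_mat (r1 + r2) (c1 + c2)"
  shows "\<exists>!(K, H, G, F). K \<in> carrier_mat r1 c1 \<and> H \<in> carrier_mat r1 c2 \<and>
           G \<in> carrier_mat r2 c1 \<and> F \<in> carrier_mat r2 c2 \<and> four_block_mat K H G F * T = Y"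
proof -
  obtain K H G F where split: "split_block (Y * Ti) r1 c1 = (K, H, G, F)"
    by (metis prod_cases4)
  have YTi: "Y * Ti \<in> carrier_mat (r1 + r2) (c1 + c2)" using Y Ti by simp
  note blocks = split_block[OF split carrier_matD[OF YTi]]
  have "four_block_mat K H G F * T = Y * Ti * T" using blocks YTi by simp
  also have "\<dots> = Y" using Y T Ti TiT by (simp add: assoc_mult_mat[OF Y Ti T] right_mult_one_mat[OF Y])
  finally have sol: "four_block_mat K H G F * T = Y" .
  have uniq: "(K', H', G', F') = (K, H, G, F)"
    if "K' \<in> carrier_mat r1 c1" "H' \<in> carrier_mat r1 c2" "G' \<in> carrier_mat r2 c1" "F' \<in> carrier_mat r2 c2"
      and eq: "four_block_mat K' H' G' F' * T = Y" for K' H' G' F'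
  proof -
    have KHGF: "four_block_mat K' H' G' F' \<in> carrier_mat (r1 + r2) (c1 + c2)" using that by simp
    have "four_block_mat K' H' G' F' = Y * Ti"
      using TTi by (simp add: eq[symmetric] assoc_mult_mat[OF KHGF T Ti] right_mult_one_mat[OF KHGF])
    then show ?thesis using that blocks YTi by (simp add: four_block_mat_inject)
  qed
  show ?thesis
  proof (rule ex1I[of _ "(K, H, G, F)"])
    fix y :: "'a mat \<times> 'a mat \<times> 'a mat \<times> 'a mat"
    assume "case y of (K, H, G, F) \<Rightarrow> K \<in> carrier_mat r1 c1 \<and> H \<in> carrier_mat r1 c2 \<and>
           G \<in> carrier_mat r2 c1 \<and> F \<in> carrier_mat r2 c2 \<and> four_block_mat K H G F * T = Y"
    moreover obtain K' H' G' F' where y: "y = (K', H', G', F')" by (metis prod_cases4)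
    ultimately show "y = (K, H, G, F)" using uniq by simp
  qed (use blocks(1-4) sol in simp)
qed

section \<open>Inverses and determinants\<close>

lemma minv_inverse:
  assumes Q: "Q \<in> carrier_mat n n" and dQ: "det Q \<noteq> 0"
  shows "minv Q \<in> carrier_mat n n" "Q * minv Q = 1\<^sub>m n" "minv Q * Q = 1\<^sub>m n"
proof -
  obtain R where R: "R \<in> carrier_mat n n" "Q * R = 1\<^sub>m n" "R * Q = 1\<^sub>m n"
    using det_non_zero_imp_unit[OF Q dQ] unfolding Units_def ring_mat_def by auto
  have "minv Q = R" unfolding minv_def carrier_matD(1)[OF Q]
  proof (rule the_equality)
    fix R' assume "R' \<in> carrier_mat n n \<and> Q * R' = 1\<^sub>m n \<and> R' * Q = 1\<^sub>m n"
    then have R': "R' \<in> carrier_mat n n" "R' * Q = 1\<^sub>m n" by auto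
    have "R' = R' * (Q * R)" using R R' by simp
    also have "\<dots> = (R' * Q) * R" by (rule assoc_mult_mat[OF R'(1) Q R(1), symmetric])
    also have "\<dots> = R" using R R' by simp
    finally show "R' = R" .
  qed (use Q R in simp)
  with R show "minv Q \<in> carrier_mat n n" "Q * minv Q = 1\<^sub>m n" "minv Q * Q = 1\<^sub>m n" by simp_all
qed

lemma invertible_matI:
  assumes "Q \<in> carrier_mat n n" "R \<in> carrier_mat n n" "Q * R = 1\<^sub>m n" "R * Q = 1\<^sub>m n"
  shows "invertible_mat Q"
  using assms unfolding invertible_mat_def inverts_mat_def by auto

lemma det_four_block_mat_state_feedback:
  fixes A :: "'a :: idom mat"
  assumes A: "A \<in> carrier_mat n n" and B: "B \<in> carrier_mat n m" and C: "C \<in> carrier_mat m n"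
    and K: "K \<in> carrier_mat m n"
  shows "det (four_block_mat (1\<^sub>m n - (A + B * K)) B C (0\<^sub>m m m))
    = det (four_block_mat (1\<^sub>m n - A) B C (0\<^sub>m m m))"
proof -
  have mK: "- K \<in> carrier_mat m n" using K by simp
  have "four_block_mat (1\<^sub>m n - (A + B * K)) B C (0\<^sub>m m m) =
      four_block_mat (1\<^sub>m n - A) B C (0\<^sub>m m m) * four_block_mat (1\<^sub>m n) (0\<^sub>m n m) (- K) (1\<^sub>m m)"
    using A B C K
    by (subst mult_four_block_mat[of _ n n _ m _ m _ _ n _ m]) (auto intro!: cong_four_block_mat simp: mat_eq_iff)
  also have "det \<dots> =
      det (four_block_mat (1\<^sub>m n - A) B C (0\<^sub>m m m)) * det (four_block_mat (1\<^sub>m n) (0\<^sub>m n m) (- K) (1\<^sub>m m))"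
    using A B C mK by (intro det_mult[of _ "n + m"]) auto
  also have "det (four_block_mat (1\<^sub>m n) (0\<^sub>m n m) (- K) (1\<^sub>m m)) = 1"
    using det_four_block_mat_upper_right_zero[OF one_carrier_mat refl mK one_carrier_mat] by simp
  finally show ?thesis by simp
qed

lemma det_four_block_mat_schur:
  fixes Q :: "'a :: field mat"
  assumes Q: "Q \<in> carrier_mat n n" and Qi: "Qi \<in> carrier_mat n n" "Qi * Q = 1\<^sub>m n"
    and B: "B \<in> carrier_mat n m" and C: "C \<in> carrier_mat m n"
  shows "det (four_block_mat Q B C (0\<^sub>m m m)) = det Q * det (- (C * Qi * B))"
proof -
  have CQi: "C * Qi \<in> carrier_mat m n" and S: "- (C * Qi * B) \<in> carrier_mat m m" using C Qi B by auto
  have "C * Qi * Q = C" using C Qi Q by (simp add: assoc_mult_mat[OF C Qi(1) Q])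
  moreover have "C * Qi * B + - (C * Qi * B) = 0\<^sub>m m m" using C Qi B by (simp add: mat_eq_iff)
  ultimately have "four_block_mat Q B C (0\<^sub>m m m) =
      four_block_mat (1\<^sub>m n) (0\<^sub>m n m) (C * Qi) (1\<^sub>m m) * four_block_mat Q B (0\<^sub>m m n) (- (C * Qi * B))"
    using Q B C S CQi
    by (simp add: mult_four_block_mat[OF one_carrier_mat zero_carrier_mat CQi one_carrier_mat Q B zero_carrier_mat S]
        left_mult_zero_mat[OF S] left_mult_one_mat[OF S])
  also have "det \<dots> = det Q * det (- (C * Qi * B))"
    using det_mult[OF four_block_carrier_mat[OF one_carrier_mat one_carrier_mat]
        four_block_carrier_mat[OF Q S], of "0\<^sub>m n m" "C * Qi" B "0\<^sub>m m n"]
      det_four_block_mat_upper_right_zero[OF one_carrier_mat refl CQi one_carrier_mat]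
      det_four_block_mat_lower_left_zero[OF Q B refl S] by simp
  finally show ?thesis .
qed

section \<open>Fixed points\<close>

lemma intertwined_fixed_vec_eq_zero:
  fixes M :: "'a :: comm_ring_1 mat"
  assumes M: "M \<in> carrier_mat k k" and T: "T \<in> carrier_mat k k" and Ti: "Ti \<in> carrier_mat k k"
    and S: "S \<in> carrier_mat k k" and TiT: "Ti * T = 1\<^sub>m k" and TTi: "T * Ti = 1\<^sub>m k"
    and MT: "M * T = T * S"
    and S_fixed: "\<And>e. e \<in> carrier_vec k \<Longrightarrow> S *\<^sub>v e = e \<Longrightarrow> e = 0\<^sub>v k"
    and d: "d \<in> carrier_vec k" and Md: "M *\<^sub>v d = d"
  shows "d = 0\<^sub>v k"
proof -
  have e: "Ti *\<^sub>v d \<in> carrier_vec k" using Ti d by simp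
  have Te: "T *\<^sub>v (Ti *\<^sub>v d) = d"
    using d TTi by (simp add: assoc_mult_mat_vec[OF T Ti d, symmetric])
  have "T *\<^sub>v (S *\<^sub>v (Ti *\<^sub>v d)) = (M * T) *\<^sub>v (Ti *\<^sub>v d)"
    using MT by (simp add: assoc_mult_mat_vec[OF T S e, symmetric])
  also have "\<dots> = d" using Te Md by (simp add: assoc_mult_mat_vec[OF M T e])
  finally have "Ti *\<^sub>v (T *\<^sub>v (S *\<^sub>v (Ti *\<^sub>v d))) = Ti *\<^sub>v d" by simp
  then have "S *\<^sub>v (Ti *\<^sub>v d) = Ti *\<^sub>v d"
    using S e TiT by (simp add: assoc_mult_mat_vec[OF Ti T, symmetric])
  then have "Ti *\<^sub>v d = 0\<^sub>v k" by (rule S_fixed[OF e])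
  moreover have "T *\<^sub>v 0\<^sub>v k = 0\<^sub>v k" using T by auto
  ultimately show ?thesis using Te by simp
qed

lemma resolvent_fixed_point:
  fixes W :: "'a :: comm_ring_1 mat"
  assumes W: "W \<in> carrier_mat n n" and Qi: "Qi \<in> carrier_mat n n" "(1\<^sub>m n - W) * Qi = 1\<^sub>m n"
    and y: "y \<in> carrier_vec n"
  shows "W *\<^sub>v (Qi *\<^sub>v y) + y = Qi *\<^sub>v y"
proof -
  have x: "Qi *\<^sub>v y \<in> carrier_vec n" and Wx: "W *\<^sub>v (Qi *\<^sub>v y) \<in> carrier_vec n"
    and IW: "1\<^sub>m n - W \<in> carrier_mat n n" using W Qi y by auto
  have "Qi *\<^sub>v y - W *\<^sub>v (Qi *\<^sub>v y) = (1\<^sub>m n - W) *\<^sub>v (Qi *\<^sub>v y)"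
    using W x by (simp add: minus_mult_distrib_mat_vec[OF one_carrier_mat W x])
  also have "\<dots> = y"
    using W Qi y by (simp add: assoc_mult_mat_vec[OF IW Qi(1) y, symmetric])
  finally have eq: "Qi *\<^sub>v y - W *\<^sub>v (Qi *\<^sub>v y) = y" .
  show ?thesis
  proof (rule eq_vecI)
    fix i assume "i < dim_vec (Qi *\<^sub>v y)"
    then show "(W *\<^sub>v (Qi *\<^sub>v y) + y) $ i = (Qi *\<^sub>v y) $ i"
      using arg_cong[OF eq, of "\<lambda>v. v $ i"] carrier_vecD[OF Wx] carrier_vecD[OF x] y
      by (simp add: algebra_simps)
  qed (use Wx Qi y in simp)
qed

lemma affine_fixed_point_unique:
  fixes M :: "'a :: comm_ring_1 mat"
  assumes M: "M \<in> carrier_mat k k"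
    and M_fixed: "\<And>d. d \<in> carrier_vec k \<Longrightarrow> M *\<^sub>v d = d \<Longrightarrow> d = 0\<^sub>v k"
    and p: "p \<in> carrier_vec k" "p = M *\<^sub>v p + c" and q: "q \<in> carrier_vec k" "q = M *\<^sub>v q + c"
  shows "p = q"
proof -
  have "M *\<^sub>v (p - q) = M *\<^sub>v p - M *\<^sub>v q" using M p q by (simp add: mult_minus_distrib_mat_vec)
  also have "\<dots> = p - q" using p q M by (simp add: vec_eq_iff)
  finally have "p - q = 0\<^sub>v k" using M_fixed p q by simp
  then show ?thesis using p q by (simp add: vec_eq_iff)
qed

section \<open>The Kronecker shift and feasible points of Problem 3\<close>

lemma kron_shift_carrier: "kron (shift_mat N) (1\<^sub>m n) \<in> carrier_mat (n * N) (n * N)"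
  unfolding kron_def shift_mat_def by (auto simp: mult.commute)

lemma index_kron_shift:
  assumes i: "i < n * N" and k: "k < n * N"
  shows "kron (shift_mat N) (1\<^sub>m n) $$ (i, k) = (if i = k + n then 1 else 0)"
proof -
  have n: "n > 0" using i by (cases n) auto
  have "i div n < N" "k div n < N" using i k by (simp_all add: less_mult_imp_div_less mult.commute)
  then have "kron (shift_mat N) (1\<^sub>m n) $$ (i, k) =
      (if i div n = Suc (k div n) \<and> i mod n = k mod n then 1 else 0)"
    unfolding kron_def shift_mat_def using i k n by (auto simp: mult.commute)
  moreover have "i div n = Suc (k div n) \<and> i mod n = k mod n \<longleftrightarrow> i = k + n"
  proof
    assume "i div n = Suc (k div n) \<and> i mod n = k mod n"
    then have "n * (i div n) + i mod n = n * (k div n) + k mod n + n" by simp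
    then show "i = k + n" by simp
  qed (use n in simp)
  ultimately show ?thesis by simp
qed

lemma kron_shift_fixed_vec_eq_zero:
  assumes e: "e \<in> carrier_vec (n * N)" and fixed: "kron (shift_mat N) (1\<^sub>m n) *\<^sub>v e = e"
  shows "e = 0\<^sub>v (n * N)"
proof -
  have shift: "e $ i = (if n \<le> i then e $ (i - n) else 0)" if i: "i < n * N" for i
  proof -
    have "e $ i = (\<Sum>k<n * N. (if i = k + n then 1 else 0) * e $ k)"
      using arg_cong[OF fixed, of "\<lambda>v. v $ i"] kron_shift_carrier[of N n] e i
      by (auto simp: scalar_prod_def index_kron_shift atLeast0LessThan intro!: sum.cong)
    also have "\<dots> = (\<Sum>k<n * N. if k = i - n \<and> n \<le> i then e $ k else 0)"
      by (rule sum.cong) auto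
    also have "\<dots> = (if n \<le> i then e $ (i - n) else 0)"
      using i by (cases "n \<le> i") (auto simp: sum.delta)
    finally show ?thesis .
  qed
  have "i < n * N \<longrightarrow> e $ i = 0" for i
  proof (induction i rule: less_induct)
    case (less i)
    show ?case
    proof
      assume i: "i < n * N"
      show "e $ i = 0"
      proof (cases "n \<le> i")
        case True
        then have "i - n < i" using i by (cases n) auto
        then show ?thesis using less shift[OF i] i by auto
      qed (use shift[OF i] in simp)
    qed
  qed
  then show ?thesis using e by (intro eq_vecI) auto
qed

lemma kron_e1_carrier: "kron (e1_mat N) (1\<^sub>m n) \<in> carrier_mat (n * N) n"
  unfolding kron_def e1_mat_def by (auto simp: mult.commute)

lemma index_kron_e1:
  assumes k: "k < n * N" and j: "j < n"
  shows "kron (e1_mat N) (1\<^sub>m n) $$ (k, j) = (if k = j then 1 else 0)"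
proof -
  have "k div n < N" using k by (simp add: less_mult_imp_div_less mult.commute)
  then have "kron (e1_mat N) (1\<^sub>m n) $$ (k, j) = (if k div n = 0 \<and> k mod n = j then 1 else 0)"
    unfolding kron_def e1_mat_def using k j by (auto simp: mult.commute)
  also have "\<dots> = (if k = j then 1 else 0)" using j by (auto simp: div_eq_0_iff)
  finally show ?thesis .
qed

lemma feasible3_first_block:
  assumes f: "feasible3 A B n m N X U" and N: "N \<ge> 1" and i: "i < n" and j: "j < n"
  shows "X $$ (i, j) = (if i = j then 1 else 0)"
proof -
  have X: "X \<in> carrier_mat n (n * N)" and e: "X * kron (e1_mat N) (1\<^sub>m n) = 1\<^sub>m n"
    using f unfolding feasible3_def by auto
  have "j < n * N" using j N by (metis less_le_trans mult.right_neutral mult_le_mono2)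
  have "(if i = j then 1 else 0) = (X * kron (e1_mat N) (1\<^sub>m n)) $$ (i, j)" using e i j by simp
  also have "\<dots> = (\<Sum>k<n * N. X $$ (i, k) * (if k = j then 1 else 0))"
    using X kron_e1_carrier[of N n] i j
    by (auto simp: scalar_prod_def index_kron_e1 atLeast0LessThan intro!: sum.cong)
  also have "\<dots> = X $$ (i, j)" using \<open>j < n * N\<close> by (simp add: if_distrib cong: if_cong)
  finally show ?thesis by simp
qed

lemma feasible3_append_rows_Zmat:
  assumes f: "feasible3 A B n m N X U" and N: "N \<ge> 1"
  shows "\<exists>R \<in> carrier_mat n (n * (N - 1)).
    X @\<^sub>r Zmat n N = four_block_mat (1\<^sub>m n) R (0\<^sub>m (n * (N - 1)) n) (1\<^sub>m (n * (N - 1)))"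
proof
  let ?R = "mat n (n * (N - 1)) (\<lambda>(i, j). X $$ (i, j + n))"
  have X: "X \<in> carrier_mat n (n * N)" using f unfolding feasible3_def by auto
  have nN: "n * N = n + n * (N - 1)" using N by (cases N) auto
  show "?R \<in> carrier_mat n (n * (N - 1))" by simp
  show "X @\<^sub>r Zmat n N = four_block_mat (1\<^sub>m n) ?R (0\<^sub>m (n * (N - 1)) n) (1\<^sub>m (n * (N - 1)))"
  proof (rule eq_matI)
    fix i j assume "i < dim_row (four_block_mat (1\<^sub>m n) ?R (0\<^sub>m (n * (N - 1)) n) (1\<^sub>m (n * (N - 1))))"
      and "j < dim_col (four_block_mat (1\<^sub>m n) ?R (0\<^sub>m (n * (N - 1)) n) (1\<^sub>m (n * (N - 1))))"
    then have i: "i < n + n * (N - 1)" and j: "j < n + n * (N - 1)" by auto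
    show "(X @\<^sub>r Zmat n N) $$ (i, j) =
      four_block_mat (1\<^sub>m n) ?R (0\<^sub>m (n * (N - 1)) n) (1\<^sub>m (n * (N - 1))) $$ (i, j)"
      using i j X nN feasible3_first_block[OF f N, of i j]
      by (cases "i < n") (auto simp: append_rows_def Zmat_def)
  qed (use X nN in \<open>auto simp: append_rows_def Zmat_def\<close>)
qed

lemma feasible3_stacked_invertible:
  assumes f: "feasible3 A B n m N X U" and N: "N \<ge> 1"
  obtains Ti where "X @\<^sub>r Zmat n N \<in> carrier_mat (n + n * (N - 1)) (n + n * (N - 1))"
    and "Ti \<in> carrier_mat (n + n * (N - 1)) (n + n * (N - 1))"
    and "Ti * (X @\<^sub>r Zmat n N) = 1\<^sub>m (n + n * (N - 1))" "(X @\<^sub>r Zmat n N) * Ti = 1\<^sub>m (n + n * (N - 1))"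
proof -
  obtain R where R: "R \<in> carrier_mat n (n * (N - 1))"
    and T: "X @\<^sub>r Zmat n N = four_block_mat (1\<^sub>m n) R (0\<^sub>m (n * (N - 1)) n) (1\<^sub>m (n * (N - 1)))"
    using feasible3_append_rows_Zmat[OF f N] by blast
  show ?thesis
    using that[of "four_block_mat (1\<^sub>m n) (- R) (0\<^sub>m (n * (N - 1)) n) (1\<^sub>m (n * (N - 1)))"]
      four_block_unit_upper_inverse[OF R] four_block_unit_upper_inverse[of "- R" n "n * (N - 1)"] R
    unfolding T by auto
qed

section \<open>The closed loop\<close>

lemma closed_loop_intertwines_shift:
  fixes A :: "'a :: comm_ring_1 mat"
  assumes A: "A \<in> carrier_mat n n" and B: "B \<in> carrier_mat n m"
    and K: "K \<in> carrier_mat m n" and H: "H \<in> carrier_mat m n'"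
    and G: "G \<in> carrier_mat n' n" and F: "F \<in> carrier_mat n' n'"
    and X: "X \<in> carrier_mat n k" and Z: "Z \<in> carrier_mat n' k"
    and U: "U \<in> carrier_mat m k" and S: "S \<in> carrier_mat k k"
    and dyn: "A * X + B * U = X * S"
    and gain: "four_block_mat K H G F * (X @\<^sub>r Z) = U @\<^sub>r (Z * S)"
  shows "four_block_mat (A + B * K) (B * H) G F * (X @\<^sub>r Z) = (X @\<^sub>r Z) * S"
proof -
  have "(K * X + H * Z) @\<^sub>r (G * X + F * Z) = U @\<^sub>r (Z * S)"
    using gain four_block_mat_mult_append_rows[OF K H G F X Z] by simp
  then have KU: "K * X + H * Z = U" and GF: "G * X + F * Z = Z * S"
    using K H G F X Z U S by (simp_all add: append_rows_inject[of _ m k _ n'])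
  have "(A + B * K) * X + (B * H) * Z = A * X + B * (K * X + H * Z)"
    using A B K H X Z mult_add_distrib_mat[of B n m "K * X" k "H * Z"]
    by (simp add: add_mult_distrib_mat assoc_mult_mat[of _ n m] assoc_add_mat[of _ n k])
  also have "\<dots> = X * S" using KU dyn by simp
  finally show ?thesis
    using A B K H G F X Z S GF
    by (simp add: four_block_mat_mult_append_rows[of _ n n _ n'] append_rows_mult_right[of _ n k _ n'])
qed

lemma closed_loop_steady_state:
  fixes A :: "'a :: comm_ring_1 mat"
  assumes A: "A \<in> carrier_mat n n" and B: "B \<in> carrier_mat n m" and C: "C \<in> carrier_mat m n"
    and K: "K \<in> carrier_mat m n" and H: "H \<in> carrier_mat m n'"
    and G: "G \<in> carrier_mat n' n" and F: "F \<in> carrier_mat n' n'"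
    and Qi: "Qi \<in> carrier_mat n n" "(1\<^sub>m n - (A + B * K)) * Qi = 1\<^sub>m n"
    and M: "M \<in> carrier_mat m m" "C * Qi * B * M = 1\<^sub>m m"
    and r: "r \<in> carrier_vec m"
  defines "\<psi> \<equiv> (Qi *\<^sub>v (B *\<^sub>v (M *\<^sub>v r))) @\<^sub>v 0\<^sub>v n'"
  shows "\<psi> = four_block_mat (A + B * K) (B * H) G F *\<^sub>v \<psi> + ((B * M) @\<^sub>r (- (G * Qi * B * M))) *\<^sub>v r"
    and "C *\<^sub>v vec_first \<psi> n = r" and "vec_last \<psi> n' = 0\<^sub>v n'"
proof -
  define y where "y = B *\<^sub>v (M *\<^sub>v r)"
  define x where "x = Qi *\<^sub>v y"
  have y: "y \<in> carrier_vec n" and x: "x \<in> carrier_vec n"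
    unfolding x_def y_def using B M Qi r by auto
  have \<psi>: "\<psi> = x @\<^sub>v 0\<^sub>v n'" unfolding \<psi>_def x_def y_def ..
  have ABK: "A + B * K \<in> carrier_mat n n" using A B K by auto
  have through_x: "(P * Qi * B * M) *\<^sub>v r = P *\<^sub>v x" if P: "P \<in> carrier_mat k n" for P :: "'a mat" and k
  proof -
    have PQi: "P * Qi \<in> carrier_mat k n" and PQiB: "P * Qi * B \<in> carrier_mat k m" using P Qi B by auto
    have "(P * Qi * B * M) *\<^sub>v r = (P * Qi) *\<^sub>v y" unfolding y_def
      using B M r by (simp add: assoc_mult_mat_vec[OF PQiB M(1) r] assoc_mult_mat_vec[OF PQi B])
    then show ?thesis unfolding x_def using P Qi y by simp
  qed
  have "(B * M) *\<^sub>v r = y" unfolding y_def using B M r by simp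
  moreover have "(G * Qi * B * M) *\<^sub>v r = G *\<^sub>v x" using G by (rule through_x)
  ultimately have Mr: "((B * M) @\<^sub>r (- (G * Qi * B * M))) *\<^sub>v r = y @\<^sub>v (- (G *\<^sub>v x))"
    using B G M Qi r by (subst mat_mult_append[of _ n m _ n']) auto
  have ABKx: "(A + B * K) *\<^sub>v x \<in> carrier_vec n" using ABK x by simp
  have "H *\<^sub>v 0\<^sub>v n' = 0\<^sub>v m" "B *\<^sub>v 0\<^sub>v m = 0\<^sub>v n" "F *\<^sub>v 0\<^sub>v n' = 0\<^sub>v n'"
    using B H F by auto
  then have Acl: "four_block_mat (A + B * K) (B * H) G F *\<^sub>v \<psi> = ((A + B * K) *\<^sub>v x) @\<^sub>v (G *\<^sub>v x)"
    unfolding \<psi>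
    using A B K H G F x ABKx by (simp add: four_block_mat_mult_vec[of _ n n _ n'])
  have top: "(A + B * K) *\<^sub>v x + y = x"
    unfolding x_def by (rule resolvent_fixed_point[OF ABK Qi y])
  have bottom: "G *\<^sub>v x + - (G *\<^sub>v x) = 0\<^sub>v n'" using G x by (simp add: uminus_r_inv_vec[of _ n'])
  have "((A + B * K) *\<^sub>v x @\<^sub>v G *\<^sub>v x) + (y @\<^sub>v - (G *\<^sub>v x))
      = ((A + B * K) *\<^sub>v x + y) @\<^sub>v (G *\<^sub>v x + - (G *\<^sub>v x))"
    using ABKx G x y by (intro append_vec_add[of _ n _ _ n']) auto
  also have "\<dots> = \<psi>" unfolding top bottom \<psi> ..
  finally show
    "\<psi> = four_block_mat (A + B * K) (B * H) G F *\<^sub>v \<psi> + ((B * M) @\<^sub>r (- (G * Qi * B * M))) *\<^sub>v r"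
    unfolding Acl Mr by simp
  have "C *\<^sub>v x = r" using through_x[OF C] M r by simp
  moreover have "vec_first \<psi> n = x" "vec_last \<psi> n' = 0\<^sub>v n'"
    unfolding \<psi> using x by (auto simp: vec_first_def vec_last_def vec_eq_iff)
  ultimately show "C *\<^sub>v vec_first \<psi> n = r" "vec_last \<psi> n' = 0\<^sub>v n'" by simp_all
qed

lemma dc_gain_compensator_tracks:
  fixes A :: "real mat"
  assumes A: "A \<in> carrier_mat n n" and B: "B \<in> carrier_mat n m" and C: "C \<in> carrier_mat m n"
    and K: "K \<in> carrier_mat m n" and H: "H \<in> carrier_mat m n'"
    and G: "G \<in> carrier_mat n' n" and F: "F \<in> carrier_mat n' n'"
    and rank: "vec_space.rank (n + m) (four_block_mat (1\<^sub>m n - A) B C (0\<^sub>m m m)) = n + m"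
    and dQ: "det (1\<^sub>m n - (A + B * K)) \<noteq> 0"
    and Acl_fixed: "\<And>d. d \<in> carrier_vec (n + n') \<Longrightarrow>
      four_block_mat (A + B * K) (B * H) G F *\<^sub>v d = d \<Longrightarrow> d = 0\<^sub>v (n + n')"
  shows "invertible_mat (C * minv (1\<^sub>m n - (A + B * K)) * B) \<and>
    (let M = minv (C * minv (1\<^sub>m n - (A + B * K)) * B);
         L = - (G * minv (1\<^sub>m n - (A + B * K)) * B * M);
         Acl = four_block_mat (A + B * K) (B * H) G F;
         Mr = (B * M) @\<^sub>r L
     in \<forall>r \<in> carrier_vec m.
          (\<exists>!\<psi>. \<psi> \<in> carrier_vec (n + n') \<and> \<psi> = Acl *\<^sub>v \<psi> + Mr *\<^sub>v r) \<and>
          (\<forall>\<psi>. \<psi> \<in> carrier_vec (n + n') \<longrightarrow> \<psi> = Acl *\<^sub>v \<psi> + Mr *\<^sub>v r \<longrightarrow>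
                C *\<^sub>v vec_first \<psi> n = r \<and> vec_last \<psi> n' = 0\<^sub>v n'))"
proof -
  define Qi where "Qi = minv (1\<^sub>m n - (A + B * K))"
  have Q: "1\<^sub>m n - (A + B * K) \<in> carrier_mat n n" using A B K by auto
  note Qi = minv_inverse[OF Q dQ, folded Qi_def]
  define P where "P = C * Qi * B"
  have P: "P \<in> carrier_mat m m" unfolding P_def using C Qi B by auto
  have "four_block_mat (1\<^sub>m n - A) B C (0\<^sub>m m m) \<in> carrier_mat (n + m) (n + m)" using A B C by auto
  then have "det (four_block_mat (1\<^sub>m n - A) B C (0\<^sub>m m m)) \<noteq> 0"
    using vec_space.det_rank_iff rank by blast
  then have "det (- P) \<noteq> 0" unfolding P_def
    using det_four_block_mat_state_feedback[OF A B C K] det_four_block_mat_schur[OF Q Qi(1,3) B C] by auto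
  then have dP: "det P \<noteq> 0" using det_0_negate[OF P] by simp
  define M where "M = minv P"
  note M = minv_inverse[OF P dP, folded M_def]
  define Acl where "Acl = four_block_mat (A + B * K) (B * H) G F"
  have Acl: "Acl \<in> carrier_mat (n + n') (n + n')" unfolding Acl_def using A B K H G F by auto
  define Mr where "Mr = (B * M) @\<^sub>r (- (G * Qi * B * M))"
  have "\<exists>!\<psi>. \<psi> \<in> carrier_vec (n + n') \<and> \<psi> = Acl *\<^sub>v \<psi> + Mr *\<^sub>v r"
    "\<forall>\<psi>. \<psi> \<in> carrier_vec (n + n') \<longrightarrow> \<psi> = Acl *\<^sub>v \<psi> + Mr *\<^sub>v r \<longrightarrow>
       C *\<^sub>v vec_first \<psi> n = r \<and> vec_last \<psi> n' = 0\<^sub>v n'"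
    if r: "r \<in> carrier_vec m" for r
  proof -
    define \<psi>\<^sub>0 where "\<psi>\<^sub>0 = (Qi *\<^sub>v (B *\<^sub>v (M *\<^sub>v r))) @\<^sub>v 0\<^sub>v n'"
    have \<psi>\<^sub>0: "\<psi>\<^sub>0 \<in> carrier_vec (n + n')" unfolding \<psi>\<^sub>0_def using B Qi M r by auto
    note steady = closed_loop_steady_state[OF A B C K H G F Qi(1,2) M(1) _ r, folded \<psi>\<^sub>0_def Acl_def Mr_def]
    have PM: "C * Qi * B * M = 1\<^sub>m m" using M unfolding P_def by simp
    have unique: "\<psi> = \<psi>\<^sub>0" if "\<psi> \<in> carrier_vec (n + n')" "\<psi> = Acl *\<^sub>v \<psi> + Mr *\<^sub>v r" for \<psi>
      using affine_fixed_point_unique[OF Acl Acl_fixed[folded Acl_def] that \<psi>\<^sub>0 steady(1)[OF PM]] .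
    show "\<exists>!\<psi>. \<psi> \<in> carrier_vec (n + n') \<and> \<psi> = Acl *\<^sub>v \<psi> + Mr *\<^sub>v r"
      using \<psi>\<^sub>0 steady(1)[OF PM] unique by blast
    show "\<forall>\<psi>. \<psi> \<in> carrier_vec (n + n') \<longrightarrow> \<psi> = Acl *\<^sub>v \<psi> + Mr *\<^sub>v r \<longrightarrow>
       C *\<^sub>v vec_first \<psi> n = r \<and> vec_last \<psi> n' = 0\<^sub>v n'"
      using steady(2,3)[OF PM] unique by blast
  qed
  moreover have "invertible_mat P" using invertible_matI[OF P M(1-3)] .
  ultimately show ?thesis unfolding Let_def Acl_def Mr_def M_def P_def Qi_def by blast
qed

theorem lemma1:
  fixes A B C X U :: "real mat" and n m N :: nat
  assumes A: "A \<in> carrier_mat n n" and B: "B \<in> carrier_mat n m" and C: "C \<in> carrier_mat m n"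
    and reach: "reachable A B"
    and N: "N \<ge> 2"
    and rank: "vec_space.rank (n+m) (four_block_mat (1\<^sub>m n - A) B C (0\<^sub>m m m)) = n + m"
    and opt: "minimizer3 A B n m N X U"
  shows "(\<exists>!(K,H,G,F). K \<in> carrier_mat m n \<and> H \<in> carrier_mat m (n*(N-1)) \<and>
            G \<in> carrier_mat (n*(N-1)) n \<and> F \<in> carrier_mat (n*(N-1)) (n*(N-1)) \<and>
            four_block_mat K H G F * (X @\<^sub>r Zmat n N) =
              U @\<^sub>r (Zmat n N * kron (shift_mat N) (1\<^sub>m n)))
       \<and> (\<forall>K H G F. K \<in> carrier_mat m n \<longrightarrow> H \<in> carrier_mat m (n*(N-1)) \<longrightarrow>
            G \<in> carrier_mat (n*(N-1)) n \<longrightarrow> F \<in> carrier_mat (n*(N-1)) (n*(N-1)) \<longrightarrow>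
            four_block_mat K H G F * (X @\<^sub>r Zmat n N) =
              U @\<^sub>r (Zmat n N * kron (shift_mat N) (1\<^sub>m n)) \<longrightarrow>
            det (1\<^sub>m n - (A + B * K)) \<noteq> 0 \<longrightarrow>
            det (1\<^sub>m (n*(N-1)) - F) \<noteq> 0 \<longrightarrow>
            invertible_mat (C * minv (1\<^sub>m n - (A + B * K)) * B) \<and>
            (let M = minv (C * minv (1\<^sub>m n - (A + B * K)) * B);
                 L = - (G * minv (1\<^sub>m n - (A + B * K)) * B * M);
                 Acl = four_block_mat (A + B * K) (B * H) G F;
                 Mr = (B * M) @\<^sub>r L
             in \<forall>r \<in> carrier_vec m.
                  (\<exists>!\<psi>. \<psi> \<in> carrier_vec (n + n*(N-1)) \<and> \<psi> = Acl *\<^sub>v \<psi> + Mr *\<^sub>v r) \<and>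
                  (\<forall>\<psi>. \<psi> \<in> carrier_vec (n + n*(N-1)) \<longrightarrow> \<psi> = Acl *\<^sub>v \<psi> + Mr *\<^sub>v r \<longrightarrow>
                        C *\<^sub>v vec_first \<psi> n = r \<and> vec_last \<psi> (n*(N-1)) = 0\<^sub>v (n*(N-1)))))"
proof -
  define n' where "n' = n * (N - 1)"
  have nN: "n * N = n + n'" using N unfolding n'_def by (cases N) auto
  have feas: "feasible3 A B n m N X U" using opt unfolding minimizer3_def by simp
  then have X: "X \<in> carrier_mat n (n + n')" and U: "U \<in> carrier_mat m (n + n')"
    and dyn: "A * X + B * U = X * kron (shift_mat N) (1\<^sub>m n)"
    unfolding feasible3_def nN by auto
  have S: "kron (shift_mat N) (1\<^sub>m n) \<in> carrier_mat (n + n') (n + n')"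
    using kron_shift_carrier[of N n] unfolding nN .
  let ?T = "X @\<^sub>r Zmat n N"
  have Z: "Zmat n N \<in> carrier_mat n' (n + n')" unfolding Zmat_def n'_def nN[unfolded n'_def] by simp
  obtain Ti where T: "?T \<in> carrier_mat (n + n') (n + n')" and Ti: "Ti \<in> carrier_mat (n + n') (n + n')"
    "Ti * ?T = 1\<^sub>m (n + n')" "?T * Ti = 1\<^sub>m (n + n')"
    using feasible3_stacked_invertible[OF feas] N unfolding n'_def by auto
  note shift_fixed = kron_shift_fixed_vec_eq_zero[of _ n N, unfolded nN]
  have part1: "\<exists>!(K, H, G, F). K \<in> carrier_mat m n \<and> H \<in> carrier_mat m n' \<and> G \<in> carrier_mat n' n \<and>
      F \<in> carrier_mat n' n' \<and> four_block_mat K H G F * ?T = U @\<^sub>r (Zmat n N * kron (shift_mat N) (1\<^sub>m n))"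
    using U Z S by (intro ex1_four_block_mult_eq[OF T Ti]) auto
  have Acl_fixed: "d = 0\<^sub>v (n + n')"
    if "K \<in> carrier_mat m n" "H \<in> carrier_mat m n'" "G \<in> carrier_mat n' n" "F \<in> carrier_mat n' n'"
      and "four_block_mat K H G F * ?T = U @\<^sub>r (Zmat n N * kron (shift_mat N) (1\<^sub>m n))"
      and "d \<in> carrier_vec (n + n')" "four_block_mat (A + B * K) (B * H) G F *\<^sub>v d = d" for K H G F d
    using intertwined_fixed_vec_eq_zero[OF _ T Ti(1) S Ti(2,3)
        closed_loop_intertwines_shift[OF A B that(1-4) X Z U S dyn that(5)] shift_fixed] that(6,7) A B that(1-4) by fastforce
  show ?thesis unfolding n'_def[symmetric]
    by (rule conjI[OF part1], intro allI impI,
        rule dc_gain_compensator_tracks[OF A B C _ _ _ _ rank _ Acl_fixed]; assumption)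
qed

end
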